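(* Let $I,J,K$ be a partition of $[m]$ and $\bm a\in\mathbb{R}^m$ with $\mathring{P}(\bm a,I,J,K)\neq\emptyset$. Then $\mathring{P}(\bm b,I,J,K)\neq\emptyset$ for every $\bm b$ in the same open face of $\delta\mathcal{A}_{\bm o}$ as $\bm a$.
   Context: Fix nonzero $\bm u_1,\dots,\bm u_m\in\mathbb{R}^n$ (repetitions and parallel vectors allowed), $U$ the $m\times n$ matrix with these rows; $U_I,\bm a_I$ denote rows/entries indexed by $I$. For a partition $I,J,K$ of $[m]$, $\mathring{P}(\bm a,I,J,K)=\{\bm x\in\mathbb{R}^n:U_I\bm x=\bm a_I,\ U_J\bm x<\bm a_J,\ U_K\bm x>\bm a_K\}$. A circuit is $C\subseteq[m]$ with $\{\bm u_i:i\in C\}$ a minimal linearly dependent indexed family; $\bm c^C$ satisfies $\sum c_i\bm u_i=\bm 0$, $c_i\ne0\iff i\in C$. The derived arrangement $\delta\mathcal{A}_{\bm o}$ consists of hyperplanes $\langle\bm c^C,\bm y\rangle=0$ in $\mathbb{R}^m$; $\bm a,\bm b$ lie in the same open face iff $\operatorname{sign}\langle\bm c^C,\bm a\rangle=\operatorname{sign}\langle\bm c^C,\bm b\rangle$ for all circuits $C$. *)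

theory Defs
  imports "HOL-Analysis.Analysis"
begin

text \<open>Vectors u_0,...,u_{m-1} in an n-dimensional Euclidean space 'a are given by
  u :: nat => 'a, indexed by {0..<m} (standing for [m]). Vectors in R^m are nat => real,
  only entries below m matter.\<close>

definition open_cell ::
  "(nat \<Rightarrow> 'a::euclidean_space) \<Rightarrow> (nat \<Rightarrow> real) \<Rightarrow> nat set \<Rightarrow> nat set \<Rightarrow> nat set \<Rightarrow> 'a set" where
  "open_cell u a I J K = {x. (\<forall>i\<in>I. u i \<bullet> x = a i) \<and> (\<forall>j\<in>J. u j \<bullet> x < a j) \<and> (\<forall>k\<in>K. u k \<bullet> x > a k)}"

text \<open>The indexed family (u_i)_{i in C} is linearly dependent (repetitions allowed).\<close>
definition indexed_dependent :: "(nat \<Rightarrow> 'a::euclidean_space) \<Rightarrow> nat set \<Rightarrow> bool" where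
  "indexed_dependent u C \<longleftrightarrow> (\<exists>c. (\<exists>i\<in>C. c i \<noteq> 0) \<and> (\<Sum>i\<in>C. c i *\<^sub>R u i) = 0)"

definition is_circuit :: "(nat \<Rightarrow> 'a::euclidean_space) \<Rightarrow> nat \<Rightarrow> nat set \<Rightarrow> bool" where
  "is_circuit u m C \<longleftrightarrow> C \<subseteq> {0..<m} \<and> indexed_dependent u C \<and>
     (\<forall>D. D \<subset> C \<longrightarrow> \<not> indexed_dependent u D)"

definition is_circuit_vector :: "(nat \<Rightarrow> 'a::euclidean_space) \<Rightarrow> nat \<Rightarrow> nat set \<Rightarrow> (nat \<Rightarrow> real) \<Rightarrow> bool" where
  "is_circuit_vector u m C c \<longleftrightarrow> (\<Sum>i<m. c i *\<^sub>R u i) = 0 \<and> (\<forall>i<m. c i \<noteq> 0 \<longleftrightarrow> i \<in> C)"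

definition same_open_face :: "(nat \<Rightarrow> 'a::euclidean_space) \<Rightarrow> nat \<Rightarrow> (nat \<Rightarrow> real) \<Rightarrow> (nat \<Rightarrow> real) \<Rightarrow> bool" where
  "same_open_face u m a b \<longleftrightarrow> (\<forall>C c. is_circuit u m C \<and> is_circuit_vector u m C c \<longrightarrow>
      sgn (\<Sum>i<m. c i * a i) = sgn (\<Sum>i<m. c i * b i))"

end

theory Submission
  imports Defs
begin

(*
  Suppose the cell of b were empty. Separating 0 from the closed convex set
  span {(u i, - b i) | i \<in> I} + conv ({(u j, - b j) | j \<in> J} \<union> {(- u k, b k) | k \<in> K} \<union> {(0, -1)})
  yields a dependence y = (y i) among the u i with y \<ge> 0 on J, y \<le> 0 on K and
  \<langle>y, b\<rangle> \<le> 0, strictly so unless y vanishes on J \<union> K. Write y as a sum of circuit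
  vectors conformal to y. Each of them has the sign pattern of y, so pairing it
  with a point x of the cell of a shows \<langle>c, a\<rangle> = \<Sum> c i (a i - u i \<bullet> x) \<ge> 0, strictly
  if c meets J \<union> K; being in the same open face, \<langle>c, b\<rangle> has the same sign, and
  summing over the decomposition contradicts the sign of \<langle>y, b\<rangle>.
*)

lemma sum_image_redistributed:
  fixes f :: "'b \<Rightarrow> 'c::real_vector"
  assumes "finite I"
  shows "(\<Sum>i\<in>I. (c (g i) / card {k\<in>I. g k = g i}) *\<^sub>R f (g i)) = (\<Sum>v\<in>g ` I. c v *\<^sub>R f v)"
proof -
  have fiber: "(\<Sum>i\<in>{k\<in>I. g k = v}. (c (g i) / card {k\<in>I. g k = g i}) *\<^sub>R f (g i)) = c v *\<^sub>R f v"
    if "v \<in> g ` I" for v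
  proof -
    let ?F = "{k\<in>I. g k = v}"
    have "card ?F \<noteq> 0"
      using that assms by (auto simp: card_eq_0_iff)
    have "(\<Sum>i\<in>?F. (c (g i) / card {k\<in>I. g k = g i}) *\<^sub>R f (g i)) = (\<Sum>i\<in>?F. (c v / card ?F) *\<^sub>R f v)"
      by (rule sum.cong) auto
    also have "\<dots> = c v *\<^sub>R f v"
      using \<open>card ?F \<noteq> 0\<close> by (simp add: sum_constant_scaleR)
    finally show ?thesis .
  qed
  show ?thesis
    unfolding sum.image_gen[OF assms, of _ g] by (rule sum.cong[OF refl]) (rule fiber)
qed

lemma span_image_indexed:
  assumes "finite I" "p \<in> span (g ` I)"
  shows "\<exists>\<mu>. p = (\<Sum>i\<in>I. \<mu> i *\<^sub>R g i)"
proof -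
  obtain c where "p = (\<Sum>v\<in>g ` I. c v *\<^sub>R v)"
    using assms by (auto simp: span_finite)
  then show ?thesis
    using sum_image_redistributed[OF assms(1), of c g id] by (intro exI[of _ "\<lambda>i. c (g i) / card {k\<in>I. g k = g i}"]) simp
qed

lemma convex_hull_image_indexed:
  assumes "finite A" "q \<in> convex hull (h ` A)"
  shows "\<exists>l. (\<forall>j\<in>A. 0 \<le> l j) \<and> sum l A = 1 \<and> q = (\<Sum>j\<in>A. l j *\<^sub>R h j)"
proof -
  have "finite (h ` A)"
    using assms(1) by simp
  from assms(2) obtain c where c: "\<forall>v\<in>h ` A. 0 \<le> c v" "sum c (h ` A) = 1" "(\<Sum>v\<in>h ` A. c v *\<^sub>R v) = q"
    unfolding convex_hull_finite[OF \<open>finite (h ` A)\<close>] by blast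
  define l where "l j = c (h j) / card {k\<in>A. h k = h j}" for j
  have "sum l A = 1"
    using sum_image_redistributed[OF assms(1), of c h "\<lambda>_. 1::real"] c(2) by (simp add: l_def)
  moreover have "q = (\<Sum>j\<in>A. l j *\<^sub>R h j)"
    using sum_image_redistributed[OF assms(1), of c h id] c(3) by (simp add: l_def)
  moreover have "\<forall>j\<in>A. 0 \<le> l j"
    using c(1) by (simp add: l_def)
  ultimately show ?thesis
    by blast
qed

lemma gordan_alternative_with_equalities:
  fixes g h :: "nat \<Rightarrow> 'v::euclidean_space"
  assumes "finite I" "finite A"
  obtains \<alpha> where "\<forall>i\<in>I. \<alpha> \<bullet> g i = 0" "\<forall>j\<in>A. 0 < \<alpha> \<bullet> h j"
  | \<mu> l where "\<forall>j\<in>A. 0 \<le> l j" "sum l A = 1" "(\<Sum>i\<in>I. \<mu> i *\<^sub>R g i) + (\<Sum>j\<in>A. l j *\<^sub>R h j) = 0"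
proof (cases "A = {}")
  case True
  then show thesis
    using that(1)[of 0] by simp
next
  case False
  then obtain j0 where "j0 \<in> A"
    by blast
  define S where "S = (\<Union>p\<in>span (g ` I). \<Union>q\<in>convex hull (h ` A). {p + q})"
  have "closed S"
    unfolding S_def using assms(2)
    by (intro closed_compact_sums closed_span finite_imp_compact_convex_hull) simp
  moreover have "convex S"
    unfolding S_def by (intro convex_sums subspace_imp_convex subspace_span convex_convex_hull)
  show thesis
  proof (cases "0 \<in> S")
    case True
    then obtain p q where "p \<in> span (g ` I)" "q \<in> convex hull (h ` A)" "0 = p + q"
      unfolding S_def by blast
    moreover obtain \<mu> where "p = (\<Sum>i\<in>I. \<mu> i *\<^sub>R g i)"
      using span_image_indexed[OF assms(1) \<open>p \<in> span (g ` I)\<close>] by blast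
    moreover obtain l where "\<forall>j\<in>A. 0 \<le> l j" "sum l A = 1" "q = (\<Sum>j\<in>A. l j *\<^sub>R h j)"
      using convex_hull_image_indexed[OF assms(2) \<open>q \<in> convex hull (h ` A)\<close>] by blast
    ultimately show thesis
      using that(2)[of l \<mu>] by simp
  next
    case False
    obtain \<alpha> \<beta> where "0 < \<beta>" and sep: "\<And>s. s \<in> S \<Longrightarrow> \<beta> < \<alpha> \<bullet> s"
      using separating_hyperplane_closed_0[OF \<open>convex S\<close> \<open>closed S\<close> False] by blast
    have sep_hull: "\<beta> < \<alpha> \<bullet> p + \<alpha> \<bullet> h j" if "p \<in> span (g ` I)" "j \<in> A" for p j
      using sep[of "p + h j"] that hull_inc[of "h j" "h ` A"] unfolding S_def by (auto simp: inner_add_right)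
    have "\<alpha> \<bullet> g i = 0" if "i \<in> I" for i
    proof (rule ccontr)
      assume "\<alpha> \<bullet> g i \<noteq> 0"
      \<comment> \<open>the span direction g i can push the pairing with \<alpha> below \<beta>\<close>
      define r where "r = (\<beta> - \<alpha> \<bullet> h j0 - 1) / (\<alpha> \<bullet> g i)"
      have "r *\<^sub>R g i \<in> span (g ` I)"
        using that by (intro span_mul span_base) simp
      from sep_hull[OF this \<open>j0 \<in> A\<close>] show False
        using \<open>\<alpha> \<bullet> g i \<noteq> 0\<close> by (simp add: r_def)
    qed
    moreover have "0 < \<alpha> \<bullet> h j" if "j \<in> A" for j
      using sep_hull[OF span_zero that] \<open>0 < \<beta>\<close> by simp
    ultimately show thesis
      using that(1) by blast
  qed
qed

definition dependence :: "(nat \<Rightarrow> 'a::euclidean_space) \<Rightarrow> nat \<Rightarrow> (nat \<Rightarrow> real) \<Rightarrow> bool" where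
  "dependence u m y \<longleftrightarrow> (\<Sum>i<m. y i *\<^sub>R u i) = 0"

lemma open_cell_point_of_separator:
  assumes "a2 < 0"
    and "\<forall>i\<in>I. a1 \<bullet> u i = a2 * b i" "\<forall>j\<in>J. a2 * b j < a1 \<bullet> u j" "\<forall>k\<in>K. a1 \<bullet> u k < a2 * b k"
  shows "(1 / a2) *\<^sub>R a1 \<in> open_cell u b I J K"
  using assms
  by (auto simp: open_cell_def inner_commute divide_less_eq less_divide_eq mult.commute)

lemma certificate_of_homogeneous_dependence:
  assumes "(\<Sum>i<m. y i *\<^sub>R (u i, - b i)) = (0, t)" "0 \<le> t" "\<forall>j\<in>J \<union> K. y j = 0 \<Longrightarrow> 0 < t"
  shows "dependence u m y" "(\<Sum>i<m. y i * b i) \<le> 0" "(\<Sum>i<m. y i * b i) < 0 \<or> (\<exists>j\<in>J \<union> K. y j \<noteq> 0)"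
proof -
  have "dependence u m y" "(\<Sum>i<m. y i * b i) = - t"
    using arg_cong[OF assms(1), of fst] arg_cong[OF assms(1), of snd]
    by (simp_all add: dependence_def fst_sum snd_sum sum_negf)
  with assms(2,3) show "dependence u m y" "(\<Sum>i<m. y i * b i) \<le> 0"
    "(\<Sum>i<m. y i * b i) < 0 \<or> (\<exists>j\<in>J \<union> K. y j \<noteq> 0)"
    by auto
qed

lemma empty_open_cell_certificate:
  fixes u :: "nat \<Rightarrow> 'a::euclidean_space"
  assumes partition: "I \<union> J \<union> K = {0..<m}" "I \<inter> J = {}" "I \<inter> K = {}" "J \<inter> K = {}"
    and empty: "open_cell u b I J K = {}"
  obtains y where "dependence u m y" "\<forall>j\<in>J. 0 \<le> y j" "\<forall>k\<in>K. y k \<le> 0"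
    "(\<Sum>i<m. y i * b i) \<le> 0" "(\<Sum>i<m. y i * b i) < 0 \<or> (\<exists>j\<in>J \<union> K. y j \<noteq> 0)"
proof -
  have fin: "finite I" "finite (insert m (J \<union> K))"
    using partition(1) by (auto intro: finite_subset[of _ "{0..<m}"])
  have "m \<notin> J \<union> K" "{..<m} = I \<union> (J \<union> K)" "I \<inter> (J \<union> K) = {}"
    using partition by auto
  define \<sigma> :: "nat \<Rightarrow> real" where "\<sigma> i = (if i \<in> J then 1 else -1)" for i
  define G :: "nat \<Rightarrow> 'a \<times> real" where "G i = (u i, - b i)" for i
  \<comment> \<open>the extra vector (0, -1), indexed by m, forces a separator to have negative last coordinate\<close>
  define H where "H i = (if i = m then (0, -1) else \<sigma> i *\<^sub>R G i)" for i
  from gordan_alternative_with_equalities[OF fin, where g = G and h = H]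
  show thesis
  proof cases
    case (1 \<alpha>)
    obtain a1 a2 where \<alpha>: "\<alpha> = (a1, a2)"
      by fastforce
    have "0 < \<sigma> j * (a1 \<bullet> u j - a2 * b j)" if "j \<in> J \<union> K" for j
    proof -
      have "0 < \<alpha> \<bullet> H j" "j \<noteq> m"
        using 1(2) that \<open>m \<notin> J \<union> K\<close> by blast+
      then show ?thesis
        by (simp add: H_def G_def \<alpha> algebra_simps)
    qed
    moreover have "\<sigma> k = -1" if "k \<in> K" for k
      using that partition(4) by (auto simp: \<sigma>_def)
    ultimately have "\<forall>j\<in>J. a2 * b j < a1 \<bullet> u j" "\<forall>k\<in>K. a1 \<bullet> u k < a2 * b k"
      by (fastforce simp: \<sigma>_def)+
    moreover have "a2 < 0"
      using 1(2) by (simp add: \<alpha> H_def)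
    moreover have "\<forall>i\<in>I. a1 \<bullet> u i = a2 * b i"
      using 1(1) by (simp add: \<alpha> G_def)
    ultimately have "(1 / a2) *\<^sub>R a1 \<in> open_cell u b I J K"
      using open_cell_point_of_separator by blast
    with empty show thesis
      by blast
  next
    case (2 \<mu> l)
    define y where "y i = (if i \<in> I then \<mu> i else \<sigma> i * l i)" for i
    have "y j *\<^sub>R G j = l j *\<^sub>R H j" if "j \<in> J \<union> K" for j
      using that \<open>I \<inter> (J \<union> K) = {}\<close> \<open>m \<notin> J \<union> K\<close> by (auto simp: y_def H_def)
    then have "(\<Sum>i<m. y i *\<^sub>R G i) = (\<Sum>i\<in>I. \<mu> i *\<^sub>R G i) + (\<Sum>j\<in>J \<union> K. l j *\<^sub>R H j)"
      unfolding \<open>{..<m} = I \<union> (J \<union> K)\<close> using fin \<open>I \<inter> (J \<union> K) = {}\<close>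
      by (simp add: sum.union_disjoint y_def)
    also have "\<dots> = (0, l m)"
    proof -
      have "(\<Sum>j\<in>insert m (J \<union> K). l j *\<^sub>R H j) = (\<Sum>j\<in>J \<union> K. l j *\<^sub>R H j) + (0, - l m)"
        using fin \<open>m \<notin> J \<union> K\<close> by (simp add: H_def)
      with 2(3) show ?thesis
        by (simp add: add.assoc add_eq_0_iff2)
    qed
    finally have sum_y: "(\<Sum>i<m. y i *\<^sub>R (u i, - b i)) = (0, l m)"
      by (simp add: G_def)
    have "0 < l m" if "\<forall>j\<in>J \<union> K. y j = 0"
    proof -
      have "\<forall>j\<in>J \<union> K. l j = 0"
        using that \<open>I \<inter> (J \<union> K) = {}\<close> by (force simp: y_def \<sigma>_def split: if_splits)
      then show ?thesis
        using 2(2) fin \<open>m \<notin> J \<union> K\<close> by simp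
    qed
    moreover have "0 \<le> l m"
      using 2(1) by simp
    moreover have "\<forall>j\<in>J. 0 \<le> y j" "\<forall>k\<in>K. y k \<le> 0"
      using 2(1) partition(2-4) by (auto simp: y_def \<sigma>_def)
    ultimately show thesis
      using that certificate_of_homogeneous_dependence[OF sum_y] by blast
  qed
qed

definition support :: "nat \<Rightarrow> (nat \<Rightarrow> real) \<Rightarrow> nat set" where
  "support m y = {i. i < m \<and> y i \<noteq> 0}"

definition conformal :: "nat \<Rightarrow> (nat \<Rightarrow> real) \<Rightarrow> (nat \<Rightarrow> real) \<Rightarrow> bool" where
  "conformal m z y \<longleftrightarrow> (\<forall>i<m. z i \<noteq> 0 \<longrightarrow> 0 < z i * y i)"

definition circuit_vector :: "(nat \<Rightarrow> 'a::euclidean_space) \<Rightarrow> nat \<Rightarrow> (nat \<Rightarrow> real) \<Rightarrow> bool" where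
  "circuit_vector u m c \<longleftrightarrow> (\<exists>C. is_circuit u m C \<and> is_circuit_vector u m C c)"

lemma finite_support [simp]: "finite (support m y)"
  by (simp add: support_def)

lemma dependence_diff:
  assumes "dependence u m y" "dependence u m z"
  shows "dependence u m (\<lambda>i. y i - t * z i)"
proof -
  have "(\<Sum>i<m. (y i - t * z i) *\<^sub>R u i) = (\<Sum>i<m. y i *\<^sub>R u i) - t *\<^sub>R (\<Sum>i<m. z i *\<^sub>R u i)"
    by (simp add: scaleR_diff_left sum_subtractf scaleR_sum_right)
  with assms show ?thesis
    by (simp add: dependence_def)
qed

lemma dependence_scale:
  assumes "dependence u m z"
  shows "dependence u m (\<lambda>i. t * z i)"
  using dependence_diff[OF _ assms, of "\<lambda>_. 0" "- t"] by (simp add: dependence_def)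

lemma conformal_trans:
  assumes "conformal m z w" "conformal m w y"
  shows "conformal m z y"
  unfolding conformal_def
proof (intro allI impI)
  fix i assume "i < m" "z i \<noteq> 0"
  then have "0 < z i * w i"
    using assms(1) by (simp add: conformal_def)
  moreover from this have "w i \<noteq> 0"
    by auto
  then have "0 < w i * y i"
    using assms(2) \<open>i < m\<close> unfolding conformal_def by blast
  ultimately show "0 < z i * y i"
    by (auto simp: zero_less_mult_iff)
qed

lemma support_conformal_subset: "conformal m z y \<Longrightarrow> support m z \<subseteq> support m y"
  unfolding conformal_def support_def by auto

lemma conformal_sign_pattern:
  assumes "conformal m c y" "J \<union> K \<subseteq> {..<m}" "\<forall>j\<in>J. 0 \<le> y j" "\<forall>k\<in>K. y k \<le> 0"
  shows "\<forall>j\<in>J. 0 \<le> c j" "\<forall>k\<in>K. c k \<le> 0"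
proof -
  have "0 < c i * y i" if "i \<in> J \<union> K" "c i \<noteq> 0" for i
    using assms(1,2) that unfolding conformal_def by blast
  then show "\<forall>j\<in>J. 0 \<le> c j" "\<forall>k\<in>K. c k \<le> 0"
    using assms(3,4) by (fastforce simp: zero_less_mult_iff)+
qed

lemma conformal_diff:
  assumes sub: "\<forall>i<m. y i = 0 \<longrightarrow> z i = 0" and "0 \<le> t"
    and step: "\<forall>i<m. 0 < y i * z i \<longrightarrow> t * (y i * z i) \<le> y i * y i"
  shows "conformal m (\<lambda>i. y i - t * z i) y"
  unfolding conformal_def
proof (intro allI impI)
  fix i assume "i < m" "y i - t * z i \<noteq> 0"
  then have "y i \<noteq> 0"
    using sub by auto
  then have "0 < y i * y i"
    by (auto simp: zero_less_mult_iff linorder_neq_iff)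
  moreover have "t * (y i * z i) \<le> y i * y i"
  proof (cases "0 < y i * z i")
    case True
    then show ?thesis
      using step \<open>i < m\<close> by blast
  next
    case False
    then have "t * (y i * z i) \<le> 0"
      using \<open>0 \<le> t\<close> by (simp add: not_less mult_nonneg_nonpos)
    then show ?thesis
      using zero_le_square[of "y i"] by linarith
  qed
  ultimately show "0 < (y i - t * z i) * y i"
    using \<open>y i - t * z i \<noteq> 0\<close> \<open>y i \<noteq> 0\<close> by (auto simp: algebra_simps less_le)
qed

lemma conformal_reduction:
  assumes sub: "\<forall>i<m. y i = 0 \<longrightarrow> z i = 0" and "i0 < m" "0 < y i0 * z i0"
  obtains t where "0 < t" "conformal m (\<lambda>i. y i - t * z i) y" "support m (\<lambda>i. y i - t * z i) \<subset> support m y"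
proof -
  define Q where "Q = {i. i < m \<and> 0 < y i * z i}"
  have "finite Q" "i0 \<in> Q"
    using assms by (auto simp: Q_def)
  \<comment> \<open>the largest step along -z that keeps every sign of y\<close>
  define t where "t = Min ((\<lambda>i. y i / z i) ` Q)"
  have "t \<in> (\<lambda>i. y i / z i) ` Q"
    unfolding t_def using \<open>finite Q\<close> \<open>i0 \<in> Q\<close> by (intro Min_in) auto
  then obtain i1 where "i1 \<in> Q" "t = y i1 / z i1"
    by blast
  have "0 < t"
    using \<open>i1 \<in> Q\<close> by (auto simp: \<open>t = y i1 / z i1\<close> Q_def zero_less_mult_iff zero_less_divide_iff)
  have "t * (y i * z i) \<le> y i * y i" if "i \<in> Q" for i
  proof -
    have "t \<le> y i / z i"
      using that \<open>finite Q\<close> by (simp add: t_def)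
    then have "t * (y i * z i) \<le> y i / z i * (y i * z i)"
      using that by (intro mult_right_mono) (auto simp: Q_def)
    also have "\<dots> = y i * y i"
      using that by (auto simp: Q_def)
    finally show ?thesis .
  qed
  then have "conformal m (\<lambda>i. y i - t * z i) y"
    using conformal_diff[OF sub] \<open>0 < t\<close> by (simp add: Q_def)
  moreover have "i1 \<in> support m y" "i1 \<notin> support m (\<lambda>i. y i - t * z i)"
    using \<open>i1 \<in> Q\<close> by (auto simp: support_def Q_def \<open>t = y i1 / z i1\<close>)
  ultimately show thesis
    using that \<open>0 < t\<close> support_conformal_subset by blast
qed

lemma circuit_vector_dependence:
  assumes "circuit_vector u m c"
  shows "dependence u m c" "support m c \<noteq> {}"
proof -
  obtain C where C: "is_circuit u m C" "is_circuit_vector u m C c"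
    using assms by (auto simp: circuit_vector_def)
  then show "dependence u m c"
    by (simp add: is_circuit_vector_def dependence_def)
  from C(1) obtain i where "i \<in> C" "C \<subseteq> {0..<m}"
    unfolding is_circuit_def indexed_dependent_def by blast
  then have "i < m"
    by auto
  with C(2) \<open>i \<in> C\<close> have "c i \<noteq> 0"
    unfolding is_circuit_vector_def by blast
  with \<open>i < m\<close> show "support m c \<noteq> {}"
    by (auto simp: support_def)
qed

lemma circuit_vector_scale:
  assumes "circuit_vector u m c" "t \<noteq> 0"
  shows "circuit_vector u m (\<lambda>i. t * c i)"
proof -
  obtain C where C: "is_circuit u m C" "is_circuit_vector u m C c"
    using assms(1) by (auto simp: circuit_vector_def)
  have "(\<Sum>i<m. (t * c i) *\<^sub>R u i) = t *\<^sub>R (\<Sum>i<m. c i *\<^sub>R u i)"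
    by (simp add: scaleR_sum_right)
  then have "is_circuit_vector u m C (\<lambda>i. t * c i)"
    using C(2) assms(2) by (simp add: is_circuit_vector_def)
  with C(1) show ?thesis
    by (auto simp: circuit_vector_def)
qed

lemma dependence_smaller_or_circuit_vector:
  assumes "dependence u m y" "support m y \<noteq> {}"
  shows "circuit_vector u m y \<or> (\<exists>z. dependence u m z \<and> support m z \<noteq> {} \<and> support m z \<subset> support m y)"
proof (cases "\<exists>D. D \<subset> support m y \<and> indexed_dependent u D")
  case True
  then obtain D c where D: "D \<subset> support m y" "\<exists>i\<in>D. c i \<noteq> 0" "(\<Sum>i\<in>D. c i *\<^sub>R u i) = 0"
    unfolding indexed_dependent_def by blast
  define z where "z i = (if i \<in> D then c i else 0)" for i
  have "D \<subseteq> {..<m}"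
    using D(1) by (auto simp: support_def)
  then have "(\<Sum>i<m. z i *\<^sub>R u i) = (\<Sum>i\<in>D. c i *\<^sub>R u i)"
    by (intro sum.mono_neutral_cong_right) (auto simp: z_def)
  then have "dependence u m z"
    using D(3) by (simp add: dependence_def)
  moreover have "support m z \<subseteq> D" "support m z \<noteq> {}"
    using D(2) \<open>D \<subseteq> {..<m}\<close> by (auto simp: support_def z_def)
  ultimately show ?thesis
    using D(1) by blast
next
  case False
  have "(\<Sum>i\<in>support m y. y i *\<^sub>R u i) = (\<Sum>i<m. y i *\<^sub>R u i)"
    by (rule sum.mono_neutral_left) (auto simp: support_def)
  then have "indexed_dependent u (support m y)"
    using assms unfolding indexed_dependent_def dependence_def support_def by auto
  moreover have "support m y \<subseteq> {0..<m}"
    by (auto simp: support_def)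
  ultimately have "is_circuit u m (support m y)"
    using False unfolding is_circuit_def by blast
  moreover have "is_circuit_vector u m (support m y) y"
    using assms(1) by (auto simp: is_circuit_vector_def dependence_def support_def)
  ultimately show ?thesis
    by (auto simp: circuit_vector_def)
qed

lemma smaller_conformal_dependence:
  assumes z: "dependence u m z" "support m z \<noteq> {}" and "\<not> circuit_vector u m z"
  obtains w where "dependence u m w" "support m w \<noteq> {}" "conformal m w z" "support m w \<subset> support m z"
proof -
  obtain d where d: "dependence u m d" "support m d \<noteq> {}" "support m d \<subset> support m z"
    using dependence_smaller_or_circuit_vector[OF z] assms(3) by blast
  then obtain i0 where i0: "i0 < m" "d i0 \<noteq> 0" "z i0 \<noteq> 0"
    by (auto simp: support_def)
  define s :: real where "s = (if 0 < z i0 * d i0 then 1 else -1)"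
  have "0 < z i0 * (s * d i0)"
    using i0 by (auto simp: s_def zero_less_mult_iff linorder_neq_iff)
  moreover have "\<forall>i<m. z i = 0 \<longrightarrow> s * d i = 0"
    using d(3) by (auto simp: support_def)
  ultimately obtain t where "0 < t" and w: "conformal m (\<lambda>i. z i - t * (s * d i)) z"
    "support m (\<lambda>i. z i - t * (s * d i)) \<subset> support m z"
    using conformal_reduction[of m z "\<lambda>i. s * d i" i0] \<open>i0 < m\<close> by auto
  \<comment> \<open>the reduced vector cannot vanish, because z is not a multiple of d\<close>
  have "support m (\<lambda>i. z i - t * (s * d i)) \<noteq> {}"
  proof
    assume "support m (\<lambda>i. z i - t * (s * d i)) = {}"
    then have "support m z \<subseteq> support m d"
      by (auto simp: support_def)
    with d(3) show False
      by blast
  qed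
  moreover have "dependence u m (\<lambda>i. z i - t * (s * d i))"
    using dependence_diff[OF z(1) dependence_scale[OF d(1)]] .
  ultimately show thesis
    using that w by blast
qed

lemma exists_conformal_circuit_vector:
  assumes "dependence u m y" "support m y \<noteq> {}"
  obtains c where "circuit_vector u m c" "conformal m c y"
proof -
  let ?P = "\<lambda>z. dependence u m z \<and> support m z \<noteq> {} \<and> conformal m z y"
  have "conformal m y y"
    by (auto simp: conformal_def zero_less_mult_iff linorder_neq_iff)
  with assms have "?P y"
    by blast
  then obtain z where "?P z" and least: "\<And>w. ?P w \<Longrightarrow> card (support m z) \<le> card (support m w)"
    using ex_has_least_nat[of ?P y "\<lambda>z. card (support m z)"] by blast
  then have z: "dependence u m z" "support m z \<noteq> {}" "conformal m z y"
    by blast+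
  have "circuit_vector u m z"
  proof (rule ccontr)
    assume "\<not> circuit_vector u m z"
    with z(1,2) obtain w where w: "dependence u m w" "support m w \<noteq> {}" "conformal m w z"
      "support m w \<subset> support m z"
      by (rule smaller_conformal_dependence)
    then have "card (support m z) \<le> card (support m w)"
      using least conformal_trans[OF w(3) z(3)] by blast
    with psubset_card_mono[OF finite_support w(4)] show False
      by simp
  qed
  with z(3) that show thesis
    by blast
qed

lemma conformal_circuit_decomposition:
  assumes "dependence u m y"
  shows "\<exists>cs. (\<forall>c\<in>set cs. circuit_vector u m c \<and> conformal m c y) \<and> (\<forall>i<m. y i = (\<Sum>c\<leftarrow>cs. c i))"
  using assms
proof (induction "card (support m y)" arbitrary: y rule: less_induct)
  case less
  show ?case
  proof (cases "support m y = {}")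
    case True
    then show ?thesis
      by (intro exI[of _ "[]"]) (auto simp: support_def)
  next
    case False
    then obtain c where c: "circuit_vector u m c" "conformal m c y"
      using exists_conformal_circuit_vector less.prems by blast
    then obtain i0 where "i0 < m" "c i0 \<noteq> 0"
      using circuit_vector_dependence(2)[OF c(1)] by (auto simp: support_def)
    moreover have "\<forall>i<m. y i = 0 \<longrightarrow> c i = 0"
      using c(2) by (auto simp: conformal_def)
    ultimately obtain t where "0 < t" and reduced: "conformal m (\<lambda>i. y i - t * c i) y"
      "support m (\<lambda>i. y i - t * c i) \<subset> support m y"
      using conformal_reduction[of m y c i0] c(2) by (auto simp: conformal_def mult.commute)
    define w where "w = (\<lambda>i. y i - t * c i)"
    have "dependence u m w"
      unfolding w_def using dependence_diff less.prems circuit_vector_dependence(1)[OF c(1)] by blast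
    moreover have "card (support m w) < card (support m y)"
      using reduced(2) by (simp add: w_def psubset_card_mono)
    ultimately obtain cs where cs: "\<forall>e\<in>set cs. circuit_vector u m e \<and> conformal m e w"
      "\<forall>i<m. w i = (\<Sum>e\<leftarrow>cs. e i)"
      using less.hyps by blast
    have "circuit_vector u m (\<lambda>i. t * c i)"
      using circuit_vector_scale[OF c(1)] \<open>0 < t\<close> by simp
    moreover have "conformal m (\<lambda>i. t * c i) y"
      using c(2) \<open>0 < t\<close> unfolding conformal_def by (simp add: mult.assoc)
    moreover have "\<forall>e\<in>set cs. conformal m e y"
      using cs(1) conformal_trans reduced(1) unfolding w_def by blast
    ultimately show ?thesis
      using cs unfolding w_def by (intro exI[of _ "(\<lambda>i. t * c i) # cs"]) (auto simp: algebra_simps)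
  qed
qed

lemma dependence_pairing_slack:
  assumes "dependence u m y"
  shows "(\<Sum>i<m. y i * a i) = (\<Sum>i<m. y i * (a i - u i \<bullet> x))"
proof -
  have "(\<Sum>i<m. y i * (u i \<bullet> x)) = (\<Sum>i<m. y i *\<^sub>R u i) \<bullet> x"
    by (simp add: inner_sum_left)
  also have "\<dots> = 0"
    using assms by (simp add: dependence_def)
  finally show ?thesis
    by (simp add: algebra_simps sum_subtractf)
qed

lemma pairing_nonneg_on_open_cell:
  assumes part: "I \<union> J \<union> K = {0..<m}" and x: "x \<in> open_cell u a I J K"
    and y: "dependence u m y" "\<forall>j\<in>J. 0 \<le> y j" "\<forall>k\<in>K. y k \<le> 0"
  shows "0 \<le> (\<Sum>i<m. y i * a i)"
    and "\<exists>j\<in>J \<union> K. y j \<noteq> 0 \<Longrightarrow> 0 < (\<Sum>i<m. y i * a i)"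
proof -
  have slack_J: "0 < a j - u j \<bullet> x" if "j \<in> J" for j
    using x that by (simp add: open_cell_def)
  have slack_K: "a k - u k \<bullet> x < 0" if "k \<in> K" for k
    using x that by (simp add: open_cell_def)
  have term_nonneg: "0 \<le> y i * (a i - u i \<bullet> x)" if "i \<in> {..<m}" for i
  proof -
    have "i \<in> I \<union> J \<union> K"
      unfolding part(1) using that by simp
    then consider "i \<in> I" | "i \<in> J" | "i \<in> K"
      by blast
    then show ?thesis
    proof cases
      case 1
      then show ?thesis using x by (simp add: open_cell_def)
    next
      case 2
      then show ?thesis using y(2) slack_J[of i] by simp
    next
      case 3
      then show ?thesis using y(3) slack_K[of i] by (simp add: mult_nonpos_nonpos)
    qed
  qed
  then show "0 \<le> (\<Sum>i<m. y i * a i)"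
    unfolding dependence_pairing_slack[OF y(1), of a x] by (rule sum_nonneg)
  assume "\<exists>j\<in>J \<union> K. y j \<noteq> 0"
  then obtain j where "j \<in> J \<union> K" "y j \<noteq> 0"
    by blast
  have "0 < y j * (a j - u j \<bullet> x)"
  proof (cases "j \<in> J")
    case True
    then have "0 < y j"
      using y(2) \<open>y j \<noteq> 0\<close> by (simp add: less_le)
    with slack_J[OF True] show ?thesis
      by simp
  next
    case False
    then have "j \<in> K" "y j < 0"
      using \<open>j \<in> J \<union> K\<close> y(3) \<open>y j \<noteq> 0\<close> by (auto simp: less_le)
    with slack_K[OF \<open>j \<in> K\<close>] show ?thesis
      by (simp add: mult_neg_neg)
  qed
  moreover have "j \<in> {..<m}"
    using \<open>j \<in> J \<union> K\<close> part by auto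
  ultimately show "0 < (\<Sum>i<m. y i * a i)"
    unfolding dependence_pairing_slack[OF y(1), of a x] using term_nonneg by (intro sum_pos2) auto
qed

lemma circuit_pairing_nonneg_on_face:
  assumes part: "I \<union> J \<union> K = {0..<m}" and x: "x \<in> open_cell u a I J K"
    and face: "same_open_face u m a b"
    and c: "circuit_vector u m c" "\<forall>j\<in>J. 0 \<le> c j" "\<forall>k\<in>K. c k \<le> 0"
  shows "0 \<le> (\<Sum>i<m. c i * b i)"
    and "\<exists>j\<in>J \<union> K. c j \<noteq> 0 \<Longrightarrow> 0 < (\<Sum>i<m. c i * b i)"
proof -
  have "sgn (\<Sum>i<m. c i * a i) = sgn (\<Sum>i<m. c i * b i)"
    using face c(1) by (auto simp: same_open_face_def circuit_vector_def)
  then show "0 \<le> (\<Sum>i<m. c i * b i)" "\<exists>j\<in>J \<union> K. c j \<noteq> 0 \<Longrightarrow> 0 < (\<Sum>i<m. c i * b i)"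
    using pairing_nonneg_on_open_cell[OF part x circuit_vector_dependence(1)[OF c(1)] c(2,3)]
    by (auto simp: sgn_if split: if_splits)
qed

lemma pairing_sum_list:
  fixes b :: "nat \<Rightarrow> real"
  assumes "\<forall>i<m. y i = (\<Sum>c\<leftarrow>cs. c i)"
  shows "(\<Sum>i<m. y i * b i) = (\<Sum>c\<leftarrow>cs. \<Sum>i<m. c i * b i)"
proof -
  have "(\<Sum>i<m. y i * b i) = (\<Sum>i<m. (\<Sum>c\<leftarrow>cs. c i) * b i)"
    using assms by simp
  also have "\<dots> = (\<Sum>c\<leftarrow>cs. \<Sum>i<m. c i * b i)"
    by (induction cs) (simp_all add: distrib_right sum.distrib)
  finally show ?thesis .
qed

lemma pairing_nonneg_on_face:
  assumes part: "I \<union> J \<union> K = {0..<m}" and x: "x \<in> open_cell u a I J K"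
    and face: "same_open_face u m a b"
    and y: "dependence u m y" "\<forall>j\<in>J. 0 \<le> y j" "\<forall>k\<in>K. y k \<le> 0"
  shows "0 \<le> (\<Sum>i<m. y i * b i)"
    and "\<exists>j\<in>J \<union> K. y j \<noteq> 0 \<Longrightarrow> 0 < (\<Sum>i<m. y i * b i)"
proof -
  obtain cs where cs: "\<forall>c\<in>set cs. circuit_vector u m c \<and> conformal m c y" "\<forall>i<m. y i = (\<Sum>c\<leftarrow>cs. c i)"
    using conformal_circuit_decomposition[OF y(1)] by blast
  have "J \<union> K \<subseteq> {..<m}"
    using part by auto
  have circuit_pairing: "0 \<le> (\<Sum>i<m. c i * b i)" "\<exists>j\<in>J \<union> K. c j \<noteq> 0 \<Longrightarrow> 0 < (\<Sum>i<m. c i * b i)"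
    if "c \<in> set cs" for c
  proof -
    have "circuit_vector u m c" "conformal m c y"
      using cs(1) that by auto
    then show "0 \<le> (\<Sum>i<m. c i * b i)" "\<exists>j\<in>J \<union> K. c j \<noteq> 0 \<Longrightarrow> 0 < (\<Sum>i<m. c i * b i)"
      using circuit_pairing_nonneg_on_face[OF part x face]
        conformal_sign_pattern[OF _ \<open>J \<union> K \<subseteq> {..<m}\<close> y(2,3)] by blast+
  qed
  then show "0 \<le> (\<Sum>i<m. y i * b i)"
    unfolding pairing_sum_list[OF cs(2)] by (intro sum_list_nonneg) auto
  assume "\<exists>j\<in>J \<union> K. y j \<noteq> 0"
  then obtain j where "j \<in> J \<union> K" "y j \<noteq> 0"
    by blast
  with cs(2) \<open>J \<union> K \<subseteq> {..<m}\<close> have "(\<Sum>c\<leftarrow>cs. c j) \<noteq> 0"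
    by auto
  then have "\<exists>c\<in>set cs. c j \<noteq> 0"
    by (induction cs) auto
  then obtain c where "c \<in> set cs" "c j \<noteq> 0"
    by blast
  then have "0 < (\<Sum>i<m. c i * b i)"
    using circuit_pairing(2) \<open>j \<in> J \<union> K\<close> by blast
  also have "\<dots> \<le> (\<Sum>i<m. y i * b i)"
    unfolding pairing_sum_list[OF cs(2)] using \<open>c \<in> set cs\<close> circuit_pairing(1)
    by (intro member_le_sum_list) auto
  finally show "0 < (\<Sum>i<m. y i * b i)" .
qed

theorem mainTheorem6:
  fixes u :: "nat \<Rightarrow> 'a::euclidean_space" and m :: nat
    and I J K :: "nat set" and a b :: "nat \<Rightarrow> real"
  assumes nonzero: "\<forall>i<m. u i \<noteq> 0"
    and partition: "I \<union> J \<union> K = {0..<m}" "I \<inter> J = {}" "I \<inter> K = {}" "J \<inter> K = {}"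
    and nonempty: "open_cell u a I J K \<noteq> {}"
    and face: "same_open_face u m a b"
  shows "open_cell u b I J K \<noteq> {}"
proof
  assume "open_cell u b I J K = {}"
  then obtain y where y: "dependence u m y" "\<forall>j\<in>J. 0 \<le> y j" "\<forall>k\<in>K. y k \<le> 0"
    "(\<Sum>i<m. y i * b i) \<le> 0" "(\<Sum>i<m. y i * b i) < 0 \<or> (\<exists>j\<in>J \<union> K. y j \<noteq> 0)"
    using empty_open_cell_certificate[OF partition] by blast
  obtain x where x: "x \<in> open_cell u a I J K"
    using nonempty by blast
  note pairing = pairing_nonneg_on_face[OF partition(1) x face y(1-3)]
  show False
    using y(4,5) pairing by fastforce
qed

end
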